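(* Let $G$ be a connected graph that admits a distinguishing edge coloring. Then $\theta'(G)=2$ if and only if $G\cong K_{1,2}$.
   Context: All graphs are finite and simple. An automorphism acts on edges by $\alpha(uv)=\alpha(u)\alpha(v)$. An edge coloring with $k$ colors is a surjective map $c:E(G)\to\{1,\dots,k\}$. It is distinguishing if only the identity automorphism preserves all edge colors. $\theta'(G)$ is the least integer $k$ such that every edge coloring of $G$ using exactly $k$ colors is distinguishing. *)

theory Defs
  imports Main
begin

definition simple_graph :: "'a set \<Rightarrow> 'a set set \<Rightarrow> bool" where
  "simple_graph V E \<longleftrightarrow> finite V \<and> (\<forall>e\<in>E. e \<subseteq> V \<and> card e = 2)"

definition connected_graph :: "'a set \<Rightarrow> 'a set set \<Rightarrow> bool" where
  "connected_graph V E \<longleftrightarrow> V \<noteq> {} \<and>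
     (\<forall>u\<in>V. \<forall>v\<in>V. (\<lambda>x y. {x, y} \<in> E)\<^sup>*\<^sup>* u v)"

definition graph_automorphism :: "'a set \<Rightarrow> 'a set set \<Rightarrow> ('a \<Rightarrow> 'a) \<Rightarrow> bool" where
  "graph_automorphism V E \<alpha> \<longleftrightarrow> bij_betw \<alpha> V V \<and>
     (\<forall>u\<in>V. \<forall>v\<in>V. {u, v} \<in> E \<longleftrightarrow> {\<alpha> u, \<alpha> v} \<in> E)"

definition edge_coloring :: "'a set set \<Rightarrow> nat \<Rightarrow> ('a set \<Rightarrow> nat) \<Rightarrow> bool" where
  "edge_coloring E k c \<longleftrightarrow> c ` E = {1..k}"

definition distinguishing_edge_coloring :: "'a set \<Rightarrow> 'a set set \<Rightarrow> ('a set \<Rightarrow> nat) \<Rightarrow> bool" where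
  "distinguishing_edge_coloring V E c \<longleftrightarrow>
     (\<forall>\<alpha>. graph_automorphism V E \<alpha> \<and> (\<forall>e\<in>E. c (\<alpha> ` e) = c e) \<longrightarrow> (\<forall>v\<in>V. \<alpha> v = v))"

definition admits_distinguishing_edge_coloring :: "'a set \<Rightarrow> 'a set set \<Rightarrow> bool" where
  "admits_distinguishing_edge_coloring V E \<longleftrightarrow>
     (\<exists>k c. edge_coloring E k c \<and> distinguishing_edge_coloring V E c)"

definition theta' :: "'a set \<Rightarrow> 'a set set \<Rightarrow> nat" where
  "theta' V E = (LEAST k. 1 \<le> k \<and>
      (\<forall>c. edge_coloring E k c \<longrightarrow> distinguishing_edge_coloring V E c))"

definition graph_iso :: "'a set \<Rightarrow> 'a set set \<Rightarrow> 'b set \<Rightarrow> 'b set set \<Rightarrow> bool" where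
  "graph_iso V E V' E' \<longleftrightarrow> (\<exists>f. bij_betw f V V' \<and>
     (\<forall>u\<in>V. \<forall>v\<in>V. {u, v} \<in> E \<longleftrightarrow> {f u, f v} \<in> E'))"

definition K12_V :: "nat set" where "K12_V = {0, 1, 2}"
definition K12_E :: "nat set set" where "K12_E = {{0, 1}, {0, 2}}"

end

theory Submission
  imports Defs "HOL-Combinatorics.Cycles"
begin

(* If theta' = 2, some automorphism a is nontrivial and every 2-coloring is distinguishing.
  The latter means that no nontrivial automorphism stabilizes a proper nonempty edge set S
  (color S with 1, the rest with 2), and hence that an automorphism fixing an edge is trivial.
  So E is the orbit of one edge u0 v0 under the powers of a. If some power of a fixes u0 but
  not v0, the edges through u0 form a stable set, so G is a star centered at u0; swapping two
  leaves fixes any third edge, so there are exactly two leaves. Otherwise the reflection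
  a^k u0 <-> a^-k v0 is a well defined automorphism swapping u0 and v0, impossible since it
  fixes the edge u0 v0. Conversely, in K_{1,2} swapping the leaves is nontrivial, while a
  2-coloring gives the two edges distinct colors. *)

lemma simple_graph_edgeE:
  assumes "simple_graph V E" "e \<in> E"
  obtains x y where "x \<in> V" "y \<in> V" "x \<noteq> y" "e = {x, y}"
  using assms unfolding simple_graph_def by (metis card_2_iff insert_subset)

lemma simple_graph_finite_edges:
  assumes "simple_graph V E"
  shows "finite E"
proof (rule finite_subset)
  show "E \<subseteq> Pow V" "finite (Pow V)" using assms by (auto simp: simple_graph_def)
qed

lemma graph_automorphism_image_edge:
  assumes "simple_graph V E" "graph_automorphism V E b" "e \<in> E"
  shows "b ` e \<in> E"
  using assms(1,3)
proof (rule simple_graph_edgeE)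
  fix x y assume "x \<in> V" "y \<in> V" "e = {x, y}"
  then show ?thesis using assms unfolding graph_automorphism_def by auto
qed

lemma graph_automorphism_image_edge_eq_iff:
  assumes "simple_graph V E" "graph_automorphism V E b" "e \<in> E" "f \<in> E"
  shows "b ` e = b ` f \<longleftrightarrow> e = f"
proof -
  have "inj_on b V" using assms(2) by (simp add: graph_automorphism_def bij_betw_def)
  moreover have "e \<subseteq> V" "f \<subseteq> V" using assms(1,3,4) by (auto simp: simple_graph_def)
  ultimately show ?thesis by (simp add: inj_on_image_eq_iff)
qed

lemma graph_automorphism_funpow:
  assumes "graph_automorphism V E b"
  shows "graph_automorphism V E (b ^^ k)"
proof (induction k)
  case 0 show ?case by (auto simp: graph_automorphism_def bij_betw_def)
next
  case (Suc k)
  have "(b ^^ k) x \<in> V" if "x \<in> V" for x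
    using Suc that unfolding graph_automorphism_def bij_betw_def by blast
  then show ?case
    using Suc assms bij_betw_funpow[of b V "Suc k"] unfolding graph_automorphism_def by auto
qed

lemma graph_automorphism_involutionI:
  assumes "\<And>x. x \<in> V \<Longrightarrow> b x \<in> V" "\<And>x. x \<in> V \<Longrightarrow> b (b x) = x"
    and "\<And>e. e \<in> E \<Longrightarrow> b ` e \<in> E"
  shows "graph_automorphism V E b"
  unfolding graph_automorphism_def
proof (intro conjI ballI)
  show "bij_betw b V V" by (rule bij_betw_byWitness[where f' = b]) (use assms in auto)
  fix u v assume "u \<in> V" "v \<in> V"
  then show "{u, v} \<in> E \<longleftrightarrow> {b u, b v} \<in> E"
    using assms(2) assms(3)[of "{u, v}"] assms(3)[of "{b u, b v}"] by auto
qed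

lemma connected_graph_edge_at:
  assumes "connected_graph V E" "u \<in> V" "y \<in> V" "y \<noteq> u"
  obtains z where "{z, y} \<in> E"
proof -
  have "(\<lambda>x y. {x, y} \<in> E)\<^sup>*\<^sup>* u y" using assms unfolding connected_graph_def by blast
  then show ?thesis using assms(4) that by (cases rule: rtranclp.cases) auto
qed

definition colorings_distinguishing :: "'a set \<Rightarrow> 'a set set \<Rightarrow> nat \<Rightarrow> bool" where
  "colorings_distinguishing V E k \<longleftrightarrow>
     (\<forall>c. edge_coloring E k c \<longrightarrow> distinguishing_edge_coloring V E c)"

lemma theta'_eq_2_iff:
  assumes "simple_graph V E"
  shows "theta' V E = 2 \<longleftrightarrow>
    colorings_distinguishing V E 2 \<and> \<not> colorings_distinguishing V E 1"
proof -
  let ?P = "\<lambda>k. 1 \<le> k \<and> colorings_distinguishing V E k"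
  have theta': "theta' V E = (LEAST k. ?P k)"
    by (simp add: theta'_def colorings_distinguishing_def)
  have "?P (card E + 1)"
  proof (simp add: colorings_distinguishing_def edge_coloring_def, intro allI impI)
    fix c assume "c ` E = {Suc 0..Suc (card E)}"
    then show "distinguishing_edge_coloring V E c"
      using card_image_le[OF simple_graph_finite_edges[OF assms], of c] by simp
  qed
  then have "?P (LEAST k. ?P k)" by (rule LeastI)
  show ?thesis
  proof
    assume "theta' V E = 2"
    then show "colorings_distinguishing V E 2 \<and> \<not> colorings_distinguishing V E 1"
      using \<open>?P (LEAST k. ?P k)\<close> not_less_Least[of 1 ?P] theta' by auto
  next
    assume "colorings_distinguishing V E 2 \<and> \<not> colorings_distinguishing V E 1"
    moreover have "2 \<le> k" if "?P k" for k
      using that calculation by (cases "k = 1") auto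
    ultimately have "(LEAST k. ?P k) = 2" by (intro Least_equality) auto
    then show "theta' V E = 2" using theta' by simp
  qed
qed

lemma not_colorings_distinguishing_1_iff:
  "\<not> colorings_distinguishing V E 1 \<longleftrightarrow>
     E \<noteq> {} \<and> (\<exists>a. graph_automorphism V E a \<and> (\<exists>v\<in>V. a v \<noteq> v))"
proof
  assume "\<not> colorings_distinguishing V E 1"
  then obtain c where "c ` E = {1}" "\<not> distinguishing_edge_coloring V E c"
    by (auto simp: colorings_distinguishing_def edge_coloring_def)
  then show "E \<noteq> {} \<and> (\<exists>a. graph_automorphism V E a \<and> (\<exists>v\<in>V. a v \<noteq> v))"
    unfolding distinguishing_edge_coloring_def by auto
next
  assume "E \<noteq> {} \<and> (\<exists>a. graph_automorphism V E a \<and> (\<exists>v\<in>V. a v \<noteq> v))"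
  then have "edge_coloring E 1 (\<lambda>_. 1) \<and> \<not> distinguishing_edge_coloring V E (\<lambda>_. 1)"
    by (auto simp: edge_coloring_def distinguishing_edge_coloring_def)
  then show "\<not> colorings_distinguishing V E 1"
    unfolding colorings_distinguishing_def by blast
qed

lemma stable_edge_set_automorphism_trivial:
  assumes "colorings_distinguishing V E 2" "graph_automorphism V E b"
    and "S \<subseteq> E" "S \<noteq> {}" "S \<noteq> E" "\<And>e. e \<in> E \<Longrightarrow> b ` e \<in> S \<longleftrightarrow> e \<in> S"
  shows "\<forall>v\<in>V. b v = v"
proof -
  define c where "c e = (if e \<in> S then 1 else 2 :: nat)" for e
  have "c ` E = {1, 2}" using assms(3-5) by (auto simp: c_def)
  then have "edge_coloring E 2 c" by (auto simp: edge_coloring_def)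
  then have "distinguishing_edge_coloring V E c"
    using assms(1) by (simp add: colorings_distinguishing_def)
  moreover have "\<forall>e\<in>E. c (b ` e) = c e" using assms(6) by (simp add: c_def)
  ultimately show ?thesis using assms(2) unfolding distinguishing_edge_coloring_def by blast
qed

lemma edge_fixing_automorphism_trivial:
  assumes G: "simple_graph V E" and "colorings_distinguishing V E 2"
    and "admits_distinguishing_edge_coloring V E" and b: "graph_automorphism V E b"
    and "e \<in> E" "b ` e = e"
  shows "\<forall>v\<in>V. b v = v"
proof (cases "{f\<in>E. b ` f = f} = E")
  case True
  obtain k c where c: "edge_coloring E k c" "distinguishing_edge_coloring V E c"
    using assms(3) unfolding admits_distinguishing_edge_coloring_def by blast
  have "\<forall>f\<in>E. c (b ` f) = c f" using True by (metis (mono_tags, lifting) mem_Collect_eq)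
  then show ?thesis using c b unfolding distinguishing_edge_coloring_def by blast
next
  case False
  show ?thesis
  proof (rule stable_edge_set_automorphism_trivial[OF assms(2) b])
    fix f assume "f \<in> E"
    then show "b ` f \<in> {f\<in>E. b ` f = f} \<longleftrightarrow> f \<in> {f\<in>E. b ` f = f}"
      using graph_automorphism_image_edge[OF G b]
        graph_automorphism_image_edge_eq_iff[OF G b] by auto
  qed (use False assms(5,6) in auto)
qed

lemma graph_iso_K12_iff:
  assumes "simple_graph V E"
  shows "graph_iso V E K12_V K12_E \<longleftrightarrow>
    (\<exists>c y1 y2. c \<noteq> y1 \<and> c \<noteq> y2 \<and> y1 \<noteq> y2 \<and> V = {c, y1, y2} \<and> E = {{c, y1}, {c, y2}})"
    (is "_ \<longleftrightarrow> ?K12")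
proof
  assume "graph_iso V E K12_V K12_E"
  obtain f where bij: "bij_betw f V K12_V"
    and f: "\<forall>u\<in>V. \<forall>v\<in>V. {u, v} \<in> E \<longleftrightarrow> {f u, f v} \<in> K12_E"
    using \<open>graph_iso V E K12_V K12_E\<close> unfolding graph_iso_def by blast
  obtain c y1 y2 where c: "c \<in> V" "f c = 0" and y1: "y1 \<in> V" "f y1 = 1"
    and y2: "y2 \<in> V" "f y2 = 2"
    using bij_betw_imp_surj_on[OF bij] unfolding K12_V_def by (metis imageE insertI1 insertI2)
  have inj: "inj_on f V" using bij by (simp add: bij_betw_def)
  have V: "V = {c, y1, y2}"
  proof
    show "V \<subseteq> {c, y1, y2}"
    proof
      fix x assume "x \<in> V"
      then have "f x = f c \<or> f x = f y1 \<or> f x = f y2"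
        using bij_betw_apply[OF bij] c y1 y2 unfolding K12_V_def by fastforce
      then show "x \<in> {c, y1, y2}" using inj \<open>x \<in> V\<close> c y1 y2 unfolding inj_on_def by blast
    qed
    show "{c, y1, y2} \<subseteq> V" using c y1 y2 by auto
  qed
  have "{y1, y2} \<notin> E" using f y1 y2 unfolding K12_E_def by (auto simp: doubleton_eq_iff)
  have "E = {{c, y1}, {c, y2}}"
  proof
    show "E \<subseteq> {{c, y1}, {c, y2}}"
    proof
      fix e assume "e \<in> E"
      with assms obtain x y where xy: "x \<in> V" "y \<in> V" "x \<noteq> y" "e = {x, y}"
        by (rule simple_graph_edgeE)
      then have "e = {c, y1} \<or> e = {c, y2} \<or> e = {y1, y2}"
        using V by (auto simp: insert_commute)
      then show "e \<in> {{c, y1}, {c, y2}}" using \<open>e \<in> E\<close> \<open>{y1, y2} \<notin> E\<close> by blast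
    qed
    show "{{c, y1}, {c, y2}} \<subseteq> E" using f c y1 y2 unfolding K12_E_def by auto
  qed
  moreover have "c \<noteq> y1" "c \<noteq> y2" "y1 \<noteq> y2" using c y1 y2 by auto
  ultimately show ?K12 using V by blast
next
  assume ?K12
  then obtain c y1 y2 where d: "c \<noteq> y1" "c \<noteq> y2" "y1 \<noteq> y2"
    and V: "V = {c, y1, y2}" and E: "E = {{c, y1}, {c, y2}}" by blast
  define f where "f x = (if x = c then 0 else if x = y1 then 1 else 2 :: nat)" for x
  have "bij_betw f V K12_V"
    unfolding bij_betw_def inj_on_def K12_V_def V using d by (auto simp: f_def)
  moreover have "\<forall>u\<in>V. \<forall>v\<in>V. {u, v} \<in> E \<longleftrightarrow> {f u, f v} \<in> K12_E"
    unfolding V E K12_E_def using d by (auto simp: f_def doubleton_eq_iff)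
  ultimately show "graph_iso V E K12_V K12_E" unfolding graph_iso_def by blast
qed

lemma theta'_K12:
  assumes d: "c \<noteq> y1" "c \<noteq> y2" "y1 \<noteq> y2"
  shows "theta' {c, y1, y2} {{c, y1}, {c, y2}} = 2"
proof -
  let ?V = "{c, y1, y2}" and ?E = "{{c, y1}, {c, y2}}"
  have G: "simple_graph ?V ?E" using d by (auto simp: simple_graph_def)
  have "transpose y1 y2 ` {c, y1} = {c, y2}" "transpose y1 y2 ` {c, y2} = {c, y1}"
    using d by auto
  then have "graph_automorphism ?V ?E (transpose y1 y2)"
    by (intro graph_automorphism_involutionI) (use d in auto)
  moreover have "transpose y1 y2 y1 \<noteq> y1" using d by simp
  ultimately have "\<not> colorings_distinguishing ?V ?E 1"
    using not_colorings_distinguishing_1_iff[of ?V ?E] by blast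
  moreover have "colorings_distinguishing ?V ?E 2"
    unfolding colorings_distinguishing_def distinguishing_edge_coloring_def
  proof (intro allI impI ballI)
    fix col s v
    assume col: "edge_coloring ?E 2 col"
      and s: "graph_automorphism ?V ?E s \<and> (\<forall>e\<in>?E. col (s ` e) = col e)" and "v \<in> ?V"
    have "{1..2} = {1, 2 :: nat}" by auto
    then have "{col {c, y1}, col {c, y2}} = {1, 2}" using col by (simp add: edge_coloring_def)
    then have "col {c, y1} \<noteq> col {c, y2}" by (auto simp: doubleton_eq_iff)
    have stable: "s ` e = e" if "e \<in> ?E" for e
    proof -
      have "s ` e \<in> ?E" "col (s ` e) = col e"
        using graph_automorphism_image_edge[OF G _ that] s that by auto
      then show ?thesis using that \<open>col {c, y1} \<noteq> col {c, y2}\<close> by auto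
    qed
    have "s c \<in> s ` {c, y1}" "s c \<in> s ` {c, y2}" "s y1 \<in> s ` {c, y1}" "s y2 \<in> s ` {c, y2}"
      by simp_all
    then have "s c = c" "s y1 \<in> {c, y1}" "s y2 \<in> {c, y2}"
      using stable[of "{c, y1}"] stable[of "{c, y2}"] d by auto
    moreover have "inj_on s ?V" using s by (simp add: graph_automorphism_def bij_betw_def)
    ultimately have "s y1 = y1" "s y2 = y2"
      using d by (auto dest: inj_onD)
    then show "s v = v" using \<open>s c = c\<close> \<open>v \<in> ?V\<close> by auto
  qed
  ultimately show ?thesis using theta'_eq_2_iff[OF G] by blast
qed

lemma star_edge_iff:
  assumes G: "simple_graph V E" and "connected_graph V E" "c \<in> V"
    and center: "\<And>e. e \<in> E \<Longrightarrow> c \<in> e" and "u \<in> V" "v \<in> V"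
  shows "{u, v} \<in> E \<longleftrightarrow> u = c \<and> v \<noteq> c \<or> v = c \<and> u \<noteq> c"
proof
  assume uv: "{u, v} \<in> E"
  with G obtain x y where "x \<noteq> y" "{u, v} = {x, y}" by (metis simple_graph_edgeE)
  then show "u = c \<and> v \<noteq> c \<or> v = c \<and> u \<noteq> c"
    using center[OF uv] by (auto simp: doubleton_eq_iff)
next
  have leaf: "{c, y} \<in> E" if y: "y \<in> V" "y \<noteq> c" for y
  proof -
    obtain z where z: "{z, y} \<in> E" using connected_graph_edge_at[OF assms(2,3) y] by blast
    then have "z = c" using center[OF z] y by auto
    then show ?thesis using z by (simp add: insert_commute)
  qed
  assume "u = c \<and> v \<noteq> c \<or> v = c \<and> u \<noteq> c"
  then show "{u, v} \<in> E" using leaf assms(5,6) by (metis insert_commute)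
qed

lemma star_leaves_card_eq_2:
  assumes G: "simple_graph V E" and conn: "connected_graph V E"
    and P2: "colorings_distinguishing V E 2" and adm: "admits_distinguishing_edge_coloring V E"
    and c: "c \<in> V" and center: "\<And>e. e \<in> E \<Longrightarrow> c \<in> e"
    and a: "graph_automorphism V E a" and nontrivial: "\<exists>v\<in>V. a v \<noteq> v"
  shows "card (V - {c}) = 2"
proof -
  let ?L = "V - {c}"
  note edge_iff = star_edge_iff[OF G conn c center]
  have V: "V = insert c ?L" using c by auto
  have "card ?L \<noteq> 0"
  proof
    assume "card ?L = 0"
    then have "?L = {}" using G by (simp add: simple_graph_def)
    then have "V = {c}" using c by blast
    then show False using nontrivial a unfolding graph_automorphism_def bij_betw_def by auto
  qed
  moreover have "card ?L \<noteq> 1"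
  proof
    assume "card ?L = 1"
    then obtain y where y: "?L = {y}" by (rule card_1_singletonE)
    then have "V = {c, y}" "{c, y} \<in> E" using V edge_iff by auto
    moreover have "a ` V = V" using a by (simp add: graph_automorphism_def bij_betw_def)
    ultimately have "\<forall>v\<in>V. a v = v"
      using edge_fixing_automorphism_trivial[OF G P2 adm a] by metis
    then show False using nontrivial by blast
  qed
  moreover have "\<not> card ?L \<ge> 3"
  proof
    assume "card ?L \<ge> 3"
    then obtain y1 y2 y3 where ys: "y1 \<in> ?L" "y2 \<in> ?L" "y3 \<in> ?L" "y1 \<noteq> y2" "y1 \<noteq> y3" "y2 \<noteq> y3"
    proof -
      obtain T where "T \<subseteq> ?L" "card T = 3"
        using obtain_subset_with_card_n[OF \<open>card ?L \<ge> 3\<close>] by metis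
      then show ?thesis using that by (auto simp: card_3_iff)
    qed
    let ?t = "transpose y1 y2"
    have t: "?t x \<in> V \<longleftrightarrow> x \<in> V" "?t x = c \<longleftrightarrow> x = c" for x
      using ys by (auto simp: transpose_def)
    have "graph_automorphism V E ?t"
    proof (rule graph_automorphism_involutionI)
      fix e assume "e \<in> E"
      with G obtain u v where uv: "u \<in> V" "v \<in> V" "e = {u, v}" by (rule simple_graph_edgeE)
      then have "{?t u, ?t v} \<in> E \<longleftrightarrow> {u, v} \<in> E"
        using edge_iff[of u v] edge_iff[of "?t u" "?t v"] t by simp
      then show "?t ` e \<in> E" using \<open>e \<in> E\<close> uv(3) by simp
    qed (simp_all add: t)
    moreover have "?t ` {c, y3} = {c, y3}" using ys by auto
    moreover have "{c, y3} \<in> E" using ys c edge_iff[of c y3] by auto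
    ultimately have "\<forall>v\<in>V. ?t v = v"
      using edge_fixing_automorphism_trivial[OF G P2 adm] by blast
    then show False using ys by auto
  qed
  ultimately show ?thesis by linarith
qed

lemma star_graph_iso_K12:
  assumes G: "simple_graph V E" and conn: "connected_graph V E"
    and P2: "colorings_distinguishing V E 2" and adm: "admits_distinguishing_edge_coloring V E"
    and c: "c \<in> V" and center: "\<And>e. e \<in> E \<Longrightarrow> c \<in> e"
    and a: "graph_automorphism V E a" and nontrivial: "\<exists>v\<in>V. a v \<noteq> v"
  shows "graph_iso V E K12_V K12_E"
proof -
  obtain y1 y2 where L: "V - {c} = {y1, y2}" "y1 \<noteq> y2"
    using star_leaves_card_eq_2[OF assms] by (meson card_2_iff)
  note edge_iff = star_edge_iff[OF G conn c center]
  have V: "V = {c, y1, y2}" using L c by auto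
  have "E = {{c, y1}, {c, y2}}"
  proof
    show "E \<subseteq> {{c, y1}, {c, y2}}"
    proof
      fix e assume "e \<in> E"
      with G obtain u v where "u \<in> V" "v \<in> V" "e = {u, v}" by (rule simple_graph_edgeE)
      then show "e \<in> {{c, y1}, {c, y2}}" using \<open>e \<in> E\<close> edge_iff V by (auto simp: insert_commute)
    qed
    show "{{c, y1}, {c, y2}} \<subseteq> E" using edge_iff L V by auto
  qed
  moreover have "c \<noteq> y1" "c \<noteq> y2" using L by auto
  ultimately show ?thesis using graph_iso_K12_iff[OF G] V L by blast
qed

lemma funpow_add_apply: "(f ^^ (m + n)) x = (f ^^ m) ((f ^^ n) x)"
  by (simp add: funpow_add)

lemma bij_betw_funpow_period:
  assumes "finite V" "bij_betw a V V"
  obtains N where "N > 0" "\<forall>x\<in>V. (a ^^ N) x = x"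
proof -
  let ?p = "restrict_id a V"
  have "permutation ?p"
    using assms permutes_restrict_id permutation_permutes by blast
  then obtain N where N: "?p ^^ N = id" "N > 0" by (rule permutation_is_nilpotent)
  have "(?p ^^ k) x = (a ^^ k) x" if "x \<in> V" for k x
  proof (induction k)
    case (Suc k)
    have "(a ^^ k) x \<in> V"
      using \<open>x \<in> V\<close> bij_betw_funpow[OF assms(2), of k] by (auto simp: bij_betw_def)
    then show ?case using Suc by simp
  qed simp
  then show ?thesis using that N by (metis id_apply)
qed

lemma funpow_mod_period:
  assumes "\<forall>x\<in>V. (a ^^ N) x = x" "x \<in> V"
  shows "(a ^^ i) x = (a ^^ (i mod N)) x"
proof -
  have "(a ^^ (N * q)) x = x" for q
    by (induction q) (use assms in \<open>simp_all add: funpow_add\<close>)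
  then show ?thesis
    by (metis funpow_add_apply mod_mult_div_eq mult.commute)
qed

(* On V, the exponent (N - 1) * k acts as -k. *)
lemma funpow_period_inverse:
  assumes per: "\<forall>x\<in>V. (a ^^ N) x = x" and "0 < N" "x \<in> V"
  shows "(a ^^ ((N - 1) * k)) ((a ^^ k) x) = x" "(a ^^ k) ((a ^^ ((N - 1) * k)) x) = x"
proof -
  have "(N - 1) * k + k = N * k" using \<open>0 < N\<close> by (cases N) auto
  moreover have "(a ^^ (N * k)) x = x"
    using funpow_mod_period[OF per \<open>x \<in> V\<close>, of "N * k"] by simp
  ultimately show "(a ^^ ((N - 1) * k)) ((a ^^ k) x) = x" "(a ^^ k) ((a ^^ ((N - 1) * k)) x) = x"
    by (metis funpow_add_apply add.commute)+
qed

lemma funpow_period_inverse_inverse: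
  assumes per: "\<forall>x\<in>V. (a ^^ N) x = x" and "0 < N" "x \<in> V"
  shows "(a ^^ ((N - 1) * ((N - 1) * k))) x = (a ^^ k) x"
proof -
  have "((N - 1) * ((N - 1) * k)) mod N = k mod N"
  proof (cases "N = 1")
    case False
    have "N = (N - 2) + 2" using \<open>0 < N\<close> False by linarith
    then obtain M where "N = M + 2" by blast
    then have "(N - 1) * ((N - 1) * k) = k + N * (M * k)" by (simp add: algebra_simps)
    then show ?thesis by simp
  qed simp
  then show ?thesis
    using funpow_mod_period[OF per \<open>x \<in> V\<close>, of "(N - 1) * ((N - 1) * k)"]
      funpow_mod_period[OF per \<open>x \<in> V\<close>, of k] by simp
qed

lemma reflection_consistent_same:
  assumes per: "\<forall>x\<in>V. (a ^^ N) x = x" and N: "0 < N" and "x0 \<in> V" "y0 \<in> V"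
    and same_stabilizer: "\<And>i. (a ^^ i) x0 = x0 \<longleftrightarrow> (a ^^ i) y0 = y0"
    and eq: "(a ^^ k) x0 = (a ^^ j) x0"
  shows "(a ^^ ((N - 1) * k)) y0 = (a ^^ ((N - 1) * j)) y0"
proof -
  let ?n = "\<lambda>k. (N - 1) * k"
  have "(a ^^ (?n k + j)) x0 = (a ^^ (?n k)) ((a ^^ k) x0)" using eq by (simp add: funpow_add)
  also have "\<dots> = x0" using funpow_period_inverse[OF per N \<open>x0 \<in> V\<close>] by simp
  finally have "(a ^^ (?n k + j)) y0 = y0" using same_stabilizer by blast
  then have "(a ^^ (?n j)) y0 = (a ^^ (?n j)) ((a ^^ (?n k + j)) y0)" by simp
  also have "\<dots> = (a ^^ (?n k)) ((a ^^ j) ((a ^^ (?n j)) y0))"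
    by (simp only: funpow_add_apply[symmetric]) (simp add: ac_simps)
  also have "\<dots> = (a ^^ (?n k)) y0" using funpow_period_inverse[OF per N \<open>y0 \<in> V\<close>] by simp
  finally show ?thesis by simp
qed

lemma reflection_consistent_cross:
  assumes per: "\<forall>x\<in>V. (a ^^ N) x = x" and N: "0 < N" and "x0 \<in> V" "y0 \<in> V"
    and eq: "(a ^^ k) x0 = (a ^^ j) y0"
  shows "(a ^^ ((N - 1) * k)) y0 = (a ^^ ((N - 1) * j)) x0"
proof -
  let ?n = "\<lambda>k. (N - 1) * k"
  have "(a ^^ (?n j)) x0 = (a ^^ (?n j)) ((a ^^ (?n k)) ((a ^^ k) x0))"
    using funpow_period_inverse[OF per N \<open>x0 \<in> V\<close>] by simp
  also have "\<dots> = (a ^^ (?n k)) ((a ^^ (?n j)) ((a ^^ j) y0))" using eq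
    by (simp only: funpow_add_apply[symmetric]) (simp add: ac_simps)
  also have "\<dots> = (a ^^ (?n k)) y0" using funpow_period_inverse[OF per N \<open>y0 \<in> V\<close>] by simp
  finally show ?thesis by simp
qed

lemma reflection_map_exists:
  assumes per: "\<forall>x\<in>V. (a ^^ N) x = x" and N: "0 < N" and bij: "bij_betw a V V"
    and u0: "u0 \<in> V" and v0: "v0 \<in> V"
    and same_stabilizer: "\<And>i. (a ^^ i) u0 = u0 \<longleftrightarrow> (a ^^ i) v0 = v0"
  obtains b where "\<And>k. b ((a ^^ k) u0) = (a ^^ ((N - 1) * k)) v0"
    and "\<And>k. b ((a ^^ k) v0) = (a ^^ ((N - 1) * k)) u0"
    and "\<And>x. x \<in> V \<Longrightarrow> b x \<in> V" and "\<And>x. x \<in> V \<Longrightarrow> b (b x) = x"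
proof -
  let ?p = "\<lambda>k x. (a ^^ k) x" and ?n = "\<lambda>k. (N - 1) * k"
  define R where "R x y \<longleftrightarrow>
    (\<exists>k. x = ?p k u0 \<and> y = ?p (?n k) v0 \<or> x = ?p k v0 \<and> y = ?p (?n k) u0)" for x y
  have R_functional: "y = y'" if Rxy: "R x y" "R x y'" for x y y'
  proof -
    obtain k where k: "x = ?p k u0 \<and> y = ?p (?n k) v0 \<or> x = ?p k v0 \<and> y = ?p (?n k) u0"
      using Rxy(1) unfolding R_def by blast
    obtain j where j: "x = ?p j u0 \<and> y' = ?p (?n j) v0 \<or> x = ?p j v0 \<and> y' = ?p (?n j) u0"
      using Rxy(2) unfolding R_def by blast
    from k j show ?thesis
      using reflection_consistent_same[OF per N u0 v0 same_stabilizer, of k j]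
        reflection_consistent_same[OF per N v0 u0 same_stabilizer[symmetric], of k j]
        reflection_consistent_cross[OF per N u0 v0, of k j]
        reflection_consistent_cross[OF per N v0 u0, of k j]
      by auto
  qed
  define b where "b x = (if \<exists>y. R x y then (SOME y. R x y) else x)" for x
  have b_R: "b x = y" if Rxy: "R x y" for x y
    using someI[of "R x", OF Rxy] R_functional Rxy unfolding b_def by auto
  have b_u0: "b (?p k u0) = ?p (?n k) v0" for k by (rule b_R) (auto simp: R_def)
  have b_v0: "b (?p k v0) = ?p (?n k) u0" for k by (rule b_R) (auto simp: R_def)
  have orbits_in_V: "?p k u0 \<in> V" "?p k v0 \<in> V" for k
    using bij_betw_funpow[OF bij, of k] u0 v0 by (auto simp: bij_betw_def)
  show ?thesis
  proof (rule that[OF b_u0 b_v0])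
    fix x assume "x \<in> V"
    show "b x \<in> V" "b (b x) = x"
    proof (atomize (full), cases "\<exists>y. R x y")
      case True
      then obtain k where "x = ?p k u0 \<or> x = ?p k v0" unfolding R_def by blast
      then show "b x \<in> V \<and> b (b x) = x"
        using b_u0 b_v0 orbits_in_V funpow_period_inverse_inverse[OF per N] u0 v0 by auto
    qed (simp add: b_def \<open>x \<in> V\<close>)
  qed
qed

lemma reflection_automorphism:
  assumes a: "graph_automorphism V E a"
    and per: "\<forall>x\<in>V. (a ^^ N) x = x" and N: "0 < N" and u0: "u0 \<in> V" and v0: "v0 \<in> V"
    and orbit: "E = range (\<lambda>k. (a ^^ k) ` {u0, v0})"
    and same_stabilizer: "\<And>i. (a ^^ i) u0 = u0 \<longleftrightarrow> (a ^^ i) v0 = v0"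
  obtains b where "graph_automorphism V E b" "b u0 = v0" "b v0 = u0"
proof -
  have bij: "bij_betw a V V" using a by (simp add: graph_automorphism_def)
  obtain b where b_u0: "\<And>k. b ((a ^^ k) u0) = (a ^^ ((N - 1) * k)) v0"
    and b_v0: "\<And>k. b ((a ^^ k) v0) = (a ^^ ((N - 1) * k)) u0"
    and b_V: "\<And>x. x \<in> V \<Longrightarrow> b x \<in> V" and b_b: "\<And>x. x \<in> V \<Longrightarrow> b (b x) = x"
    using reflection_map_exists[OF per N bij u0 v0 same_stabilizer] by blast
  have "graph_automorphism V E b"
  proof (rule graph_automorphism_involutionI[OF b_V b_b])
    fix e assume "e \<in> E"
    then obtain k where "e = (a ^^ k) ` {u0, v0}" using orbit by blast
    then have "b ` e = (a ^^ ((N - 1) * k)) ` {u0, v0}" using b_u0 b_v0 by auto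
    then show "b ` e \<in> E" using orbit by blast
  qed
  moreover have "b u0 = v0" "b v0 = u0" using b_u0[of 0] b_v0[of 0] by simp_all
  ultimately show ?thesis using that by blast
qed

lemma edges_single_orbit:
  assumes G: "simple_graph V E" and P2: "colorings_distinguishing V E 2"
    and a: "graph_automorphism V E a" and nontrivial: "\<exists>v\<in>V. a v \<noteq> v"
    and per: "\<forall>x\<in>V. (a ^^ N) x = x" and N: "0 < N" and e0: "e0 \<in> E"
  shows "E = range (\<lambda>k. (a ^^ k) ` e0)"
proof -
  let ?S = "range (\<lambda>k. (a ^^ k) ` e0)"
  have "?S \<subseteq> E"
    using graph_automorphism_image_edge[OF G graph_automorphism_funpow[OF a] e0] by blast
  moreover have "?S \<noteq> {}" by blast
  moreover have "a ` e \<in> ?S \<longleftrightarrow> e \<in> ?S" if "e \<in> E" for e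
  proof
    assume "a ` e \<in> ?S"
    then obtain k where k: "a ` e = (a ^^ k) ` e0" by blast
    have "(a ^^ (N - 1)) (a x) = x" if "x \<in> V" for x
      using funpow_period_inverse(1)[OF per N that, of 1] by simp
    moreover have "e \<subseteq> V" using G \<open>e \<in> E\<close> by (simp add: simple_graph_def)
    ultimately have "e = (a ^^ (N - 1)) ` a ` e" by (force simp: image_image)
    also have "\<dots> = (a ^^ (N - 1 + k)) ` e0" using k by (simp add: image_image funpow_add_apply)
    finally show "e \<in> ?S" by blast
  next
    assume "e \<in> ?S"
    then obtain k where "e = (a ^^ k) ` e0" by blast
    then have "a ` e = (a ^^ Suc k) ` e0" by (simp add: image_image)
    then show "a ` e \<in> ?S" by blast
  qed
  ultimately show ?thesis
    using stable_edge_set_automorphism_trivial[OF P2 a, of ?S] nontrivial by blast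
qed

lemma edges_through_fixed_vertex:
  assumes G: "simple_graph V E" and P2: "colorings_distinguishing V E 2"
    and b: "graph_automorphism V E b" and "x0 \<in> V" "y0 \<in> V" "{x0, y0} \<in> E"
    and "b x0 = x0" "b y0 \<noteq> y0"
  shows "\<forall>e\<in>E. x0 \<in> e"
proof (rule ccontr)
  assume "\<not> (\<forall>e\<in>E. x0 \<in> e)"
  moreover have "b ` e \<in> {e\<in>E. x0 \<in> e} \<longleftrightarrow> e \<in> {e\<in>E. x0 \<in> e}" if "e \<in> E" for e
  proof -
    have "inj_on b V" using b by (simp add: graph_automorphism_def bij_betw_def)
    moreover have "e \<subseteq> V" using G \<open>e \<in> E\<close> by (simp add: simple_graph_def)
    ultimately have "x0 \<in> b ` e \<longleftrightarrow> x0 \<in> e"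
      using \<open>b x0 = x0\<close> \<open>x0 \<in> V\<close> by (metis inj_on_image_mem_iff)
    then show ?thesis using graph_automorphism_image_edge[OF G b that] that by simp
  qed
  ultimately have "\<forall>v\<in>V. b v = v"
    using stable_edge_set_automorphism_trivial[OF P2 b, of "{e\<in>E. x0 \<in> e}"] assms(6) by blast
  then show False using assms(5,8) by blast
qed

lemma graph_iso_K12_if_colorings_distinguishing_2:
  assumes G: "simple_graph V E" and conn: "connected_graph V E"
    and adm: "admits_distinguishing_edge_coloring V E" and P2: "colorings_distinguishing V E 2"
    and a: "graph_automorphism V E a" and nontrivial: "\<exists>v\<in>V. a v \<noteq> v" and "E \<noteq> {}"
  shows "graph_iso V E K12_V K12_E"
proof -
  obtain e0 where "e0 \<in> E" using \<open>E \<noteq> {}\<close> by blast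
  with G obtain u0 v0 where u0: "u0 \<in> V" and v0: "v0 \<in> V" and "u0 \<noteq> v0" and e0: "e0 = {u0, v0}"
    by (rule simple_graph_edgeE)
  obtain N where N: "0 < N" and per: "\<forall>x\<in>V. (a ^^ N) x = x"
    using bij_betw_funpow_period a G unfolding graph_automorphism_def simple_graph_def by metis
  have orbit: "E = range (\<lambda>k. (a ^^ k) ` {u0, v0})"
    using edges_single_orbit[OF G P2 a nontrivial per N \<open>e0 \<in> E\<close>] e0 by simp
  have "\<exists>x0 y0 k. {x0, y0} = {u0, v0} \<and> (a ^^ k) x0 = x0 \<and> (a ^^ k) y0 \<noteq> y0"
  proof (rule ccontr)
    assume "\<nexists>x0 y0 k. {x0, y0} = {u0, v0} \<and> (a ^^ k) x0 = x0 \<and> (a ^^ k) y0 \<noteq> y0"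
    then have "(a ^^ i) u0 = u0 \<longleftrightarrow> (a ^^ i) v0 = v0" for i by (metis insert_commute)
    then obtain b where b: "graph_automorphism V E b" "b u0 = v0" "b v0 = u0"
      using reflection_automorphism[OF a per N u0 v0 orbit] by blast
    then have "b ` e0 = e0" using e0 by auto
    then have "\<forall>v\<in>V. b v = v"
      using edge_fixing_automorphism_trivial[OF G P2 adm b(1) \<open>e0 \<in> E\<close>] by blast
    then show False using b u0 \<open>u0 \<noteq> v0\<close> by auto
  qed
  then obtain x0 y0 k where x0y0: "{x0, y0} = {u0, v0}" "(a ^^ k) x0 = x0" "(a ^^ k) y0 \<noteq> y0"
    by blast
  moreover have "x0 \<in> V" "y0 \<in> V" using x0y0(1) u0 v0 by (auto simp: doubleton_eq_iff)
  moreover have "{x0, y0} \<in> E" using x0y0(1) e0 \<open>e0 \<in> E\<close> by simp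
  ultimately have "\<forall>e\<in>E. x0 \<in> e"
    using edges_through_fixed_vertex[OF G P2 graph_automorphism_funpow[OF a]] by blast
  then show ?thesis
    by (intro star_graph_iso_K12[OF G conn P2 adm \<open>x0 \<in> V\<close> _ a nontrivial]) blast
qed

theorem mainTheorem3:
  fixes V :: "'a set" and E :: "'a set set"
  assumes "simple_graph V E"
    and "connected_graph V E"
    and "admits_distinguishing_edge_coloring V E"
  shows "theta' V E = 2 \<longleftrightarrow> graph_iso V E K12_V K12_E"
proof
  assume "theta' V E = 2"
  then have P2: "colorings_distinguishing V E 2" and "\<not> colorings_distinguishing V E 1"
    using theta'_eq_2_iff[OF assms(1)] by blast+
  then obtain a where "graph_automorphism V E a" "\<exists>v\<in>V. a v \<noteq> v" "E \<noteq> {}"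
    unfolding not_colorings_distinguishing_1_iff by blast
  then show "graph_iso V E K12_V K12_E"
    by (rule graph_iso_K12_if_colorings_distinguishing_2[OF assms P2])
next
  assume "graph_iso V E K12_V K12_E"
  then obtain c y1 y2 where "c \<noteq> y1" "c \<noteq> y2" "y1 \<noteq> y2" "V = {c, y1, y2}" "E = {{c, y1}, {c, y2}}"
    using graph_iso_K12_iff[OF assms(1)] by blast
  then show "theta' V E = 2" using theta'_K12 by simp
qed

end
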